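(* Let $N\ge 2$ be an integer, let $\gamma>0$, $\upsilon\in(0,1]$, $P_b>0$, $h>0$, $T>0$, and let $p_1>p_2>\cdots>p_N>0$ with $p_1\le1$. Consider Problem P3: minimize $\sum_{k=1}^N \gamma p_k f_k^2$ over $(f_1,\dots,f_N,y_1,\dots,y_N)$ subject to $\sum_{k=1}^N \gamma f_k^2 \le \upsilon P_b h \sum_{k=1}^N y_k$, $\sum_{k=1}^N y_k\le T$, and $f_k>0$, $\frac{1}{f_k}-y_k\le 0$ for all $k$, and let $\bar E^*_{\mathrm{loc}}$ denote its optimal value (the minimum average energy consumption). Define $a=\frac{\gamma N^3}{\upsilon T^3}$ and $a'=\frac{\gamma}{\upsilon T^3}\left(\sum_{k=1}^N p_k^{1/3}\right)^2\left(\sum_{k=1}^N p_k^{-2/3}\right)$. Then: (1) if $a< P_bh<a'$, $$\bar E^*_{\mathrm{loc}}=\frac{\gamma}{T^2}\left[\sum_{k=1}^N(p_k+\lambda)^{1/3}\right]^2\left[\sum_{k=1}^N p_k(p_k+\lambda)^{-2/3}\right],$$ where $\lambda>0$ satisfies $\left[\sum_{k=1}^N (p_k+\lambda)^{1/3}\right]^2\left[\sum_{k=1}^N (p_k+\lambda)^{-2/3}\right]=\frac{\upsilon P_bhT^3}{\gamma}$; if $P_bh=a$, $\bar E^*_{\mathrm{loc}}=\frac{\gamma N^2}{T^2}\sum_{k=1}^N p_k$; moreover, on $a\le P_bh<a'$, $\bar E^*_{\mathrm{loc}}$ is a monotone decreasing function of $P_bh$ and $$\frac{\gamma}{T^2}\left(\sum_{k=1}^N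 p_k^{1/3}\right)^3<\bar E^*_{\mathrm{loc}}\le\frac{\gamma N^2}{T^2}\sum_{k=1}^N p_k;$$ (2) if $P_bh\ge a'$, $\bar E^*_{\mathrm{loc}}=\frac{\gamma}{T^2}\left(\sum_{k=1}^N p_k^{1/3}\right)^3$, which is independent of $P_bh$.
   Context: $f_k$ is the CPU frequency of the $k$-th cycle, $p_k$ the probability that the $k$-th cycle is executed, $\gamma f^2$ the energy per cycle at frequency $f$, $\upsilon P_b h$ the harvested power and $T$ the deadline. *)

theory Defs
  imports Complex_Main
begin

text \<open>Problem P3. Decision variables f, y indexed by 1..N. The problem data enter
  only through the harvested-power parameter c = P_b * h (together with gamma, upsilon, T).\<close>

definition P3_feasible ::
  "real \<Rightarrow> real \<Rightarrow> real \<Rightarrow> real \<Rightarrow> nat \<Rightarrow> (nat \<Rightarrow> real) \<Rightarrow> (nat \<Rightarrow> real) \<Rightarrow> bool" where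
  "P3_feasible \<gamma> \<upsilon> c T N f y \<longleftrightarrow>
     (\<Sum>k=1..N. \<gamma> * (f k)^2) \<le> \<upsilon> * c * (\<Sum>k=1..N. y k) \<and>
     (\<Sum>k=1..N. y k) \<le> T \<and>
     (\<forall>k\<in>{1..N}. f k > 0 \<and> 1 / f k - y k \<le> 0)"

definition P3_objective :: "real \<Rightarrow> nat \<Rightarrow> (nat \<Rightarrow> real) \<Rightarrow> (nat \<Rightarrow> real) \<Rightarrow> real" where
  "P3_objective \<gamma> N p f = (\<Sum>k=1..N. \<gamma> * p k * (f k)^2)"

definition P3_value ::
  "real \<Rightarrow> real \<Rightarrow> real \<Rightarrow> real \<Rightarrow> nat \<Rightarrow> (nat \<Rightarrow> real) \<Rightarrow> real" where
  "P3_value \<gamma> \<upsilon> c T N p =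
     Inf {P3_objective \<gamma> N p f | f y. P3_feasible \<gamma> \<upsilon> c T N f y}"

end

theory Submission
  imports Defs
begin

text \<open>Lagrangian duality for the energy constraint. For a multiplier \<open>l \<ge> 0\<close>, termwise
  AM-GM (a Hoelder inequality) with weights \<open>(p k + l) powr (1/3)\<close> and the time budget
  \<open>\<Sum> 1 / f k \<le> T\<close> bound the objective below by \<open>\<gamma> S(l)^3 / T^2 - l \<upsilon> c T\<close>, where
  \<open>S(l) = \<Sum> (p k + l) powr (1/3)\<close>. The frequencies \<open>f k\<close> proportional to
  \<open>(p k + l) powr (-1/3)\<close> that use the whole budget \<open>T\<close> are feasible when
  \<open>\<gamma> S(l)^2 R(l) \<le> \<upsilon> c T^3\<close>, with \<open>R(l) = \<Sum> (p k + l) powr (-2/3)\<close>, and attain the bound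
  under equality. Between the thresholds \<open>a\<close> and \<open>a'\<close> such an \<open>l > 0\<close> exists by the
  intermediate value theorem, above \<open>a'\<close> the multiplier \<open>0\<close> works, and at \<open>a\<close> the
  constraints force equal frequencies. The dual bound is strictly decreasing in \<open>c\<close>, whence
  monotonicity.\<close>

lemma amgm_cube_gap:
  fixes x r m :: real
  assumes "x \<noteq> 0"
  shows "r^3 * x^2 + 2 * m^3 / x - 3 * m^2 * r = (r * x - m)^2 * (r * x + 2 * m) / x"
  using assms by (simp add: field_simps power2_eq_square power3_eq_cube)

lemma amgm_cube:
  fixes x r m :: real
  assumes "x > 0" "r > 0" "m > 0"
  shows "3 * m^2 * r \<le> r^3 * x^2 + 2 * m^3 / x"
proof -
  have "0 \<le> (r * x - m)^2 * (r * x + 2 * m) / x" using assms by simp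
  then show ?thesis using amgm_cube_gap[of x r m] assms by linarith
qed

lemma amgm_cube_eq:
  fixes x m :: real
  assumes "x > 0" "m > 0" "x^2 + 2 * m^3 / x = 3 * m^2"
  shows "x = m"
proof -
  have "(x - m)^2 * (x + 2 * m) = 0" using amgm_cube_gap[of x 1 m] assms by simp
  then show ?thesis using assms by simp
qed

text \<open>Termwise AM-GM with \<open>m = (\<Sum>r) / T\<close>.\<close>
lemma holder_cube_reciprocal:
  fixes r f :: "'a \<Rightarrow> real"
  assumes "finite I" "I \<noteq> {}" "\<And>k. k \<in> I \<Longrightarrow> r k > 0" "\<And>k. k \<in> I \<Longrightarrow> f k > 0"
    and budget: "(\<Sum>k\<in>I. 1 / f k) \<le> T"
  shows "(\<Sum>k\<in>I. r k)^3 / T^2 \<le> (\<Sum>k\<in>I. r k^3 * f k^2)"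
proof -
  define S where "S = (\<Sum>k\<in>I. r k)"
  have S: "S > 0" unfolding S_def using assms by (simp add: sum_pos)
  have "0 < (\<Sum>k\<in>I. 1 / f k)" using assms by (simp add: sum_pos)
  with budget have T: "T > 0" by linarith
  define m where "m = S / T"
  have m: "m > 0" using S T by (simp add: m_def)
  have "3 * m^2 * S = (\<Sum>k\<in>I. 3 * m^2 * r k)" by (simp add: S_def sum_distrib_left)
  also have "\<dots> \<le> (\<Sum>k\<in>I. r k^3 * f k^2 + 2 * m^3 / f k)"
    by (rule sum_mono) (use amgm_cube assms m in auto)
  also have "\<dots> = (\<Sum>k\<in>I. r k^3 * f k^2) + 2 * m^3 * (\<Sum>k\<in>I. 1 / f k)"
    by (simp add: sum.distrib sum_distrib_left)
  also have "\<dots> \<le> (\<Sum>k\<in>I. r k^3 * f k^2) + 2 * m^3 * T"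
    using budget m by simp
  finally have "3 * m^2 * S - 2 * m^3 * T \<le> (\<Sum>k\<in>I. r k^3 * f k^2)" by simp
  moreover have "3 * m^2 * S - 2 * m^3 * T = S^3 / T^2"
    using T by (simp add: m_def field_simps power2_eq_square power3_eq_cube)
  ultimately show ?thesis by (simp add: S_def)
qed

lemma powr_one_third_cube: "(q::real) > 0 \<Longrightarrow> (q powr (1/3))^3 = q"
  by (simp add: powr_power flip: powr_powr)

lemma powr_neg_two_thirds: "(q::real) > 0 \<Longrightarrow> q powr (-2/3) = 1 / (q powr (1/3))^2"
  by (simp add: powr_power powr_minus_divide)

lemma mult_powr_neg_two_thirds: "(q::real) > 0 \<Longrightarrow> q * q powr (-2/3) = q powr (1/3)"
  by (simp add: powr_mult_base)

definition cbrt_sum :: "nat \<Rightarrow> (nat \<Rightarrow> real) \<Rightarrow> real \<Rightarrow> real" where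
  "cbrt_sum N p l = (\<Sum>k=1..N. (p k + l) powr (1/3))"

definition inv_cbrt_sq_sum :: "nat \<Rightarrow> (nat \<Rightarrow> real) \<Rightarrow> real \<Rightarrow> real" where
  "inv_cbrt_sq_sum N p l = (\<Sum>k=1..N. (p k + l) powr (-2/3))"

definition weighted_inv_cbrt_sq_sum :: "nat \<Rightarrow> (nat \<Rightarrow> real) \<Rightarrow> real \<Rightarrow> real" where
  "weighted_inv_cbrt_sq_sum N p l = (\<Sum>k=1..N. p k * (p k + l) powr (-2/3))"

text \<open>The optimal Lagrange multiplier \<open>\<lambda>\<close> of the energy constraint solves
  \<open>multiplier_function N p \<lambda> = \<upsilon> c T^3 / \<gamma>\<close>.\<close>
definition multiplier_function :: "nat \<Rightarrow> (nat \<Rightarrow> real) \<Rightarrow> real \<Rightarrow> real" where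
  "multiplier_function N p l = cbrt_sum N p l ^ 2 * inv_cbrt_sq_sum N p l"

context
  fixes \<gamma> T :: real and N :: nat and p :: "nat \<Rightarrow> real"
  assumes gamma_pos: "\<gamma> > 0" and T_pos: "T > 0" and N_pos: "N \<ge> 1"
    and p_pos: "\<And>k. k \<in> {1..N} \<Longrightarrow> p k > 0"
begin

lemma p_shift_pos: "l \<ge> 0 \<Longrightarrow> k \<in> {1..N} \<Longrightarrow> p k + l > 0"
  using p_pos[of k] by simp

lemma cbrt_sum_pos:
  assumes "l \<ge> 0"
  shows "cbrt_sum N p l > 0"
  unfolding cbrt_sum_def using N_pos p_shift_pos[OF assms] by (intro sum_pos) (auto simp: less_le)

lemma cbrt_sum_minus_inv_cbrt_sq_sum:
  assumes "l \<ge> 0"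
  shows "cbrt_sum N p l - l * inv_cbrt_sq_sum N p l = weighted_inv_cbrt_sq_sum N p l"
proof -
  have "(p k + l) powr (1/3) - l * (p k + l) powr (-2/3) = p k * (p k + l) powr (-2/3)"
    if k: "k \<in> {1..N}" for k
  proof -
    define r where "r = (p k + l) powr (1/3)"
    have r: "r > 0" "r^3 = p k + l"
      using p_shift_pos[OF assms k] powr_one_third_cube[of "p k + l"] by (auto simp: r_def)
    show ?thesis
      unfolding powr_neg_two_thirds[OF p_shift_pos[OF assms k]] r_def[symmetric]
      using r by (simp add: field_simps power2_eq_square power3_eq_cube)
  qed
  then show ?thesis
    unfolding cbrt_sum_def inv_cbrt_sq_sum_def weighted_inv_cbrt_sq_sum_def
    by (simp add: sum_distrib_left flip: sum_subtractf)
qed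

lemma weighted_inv_cbrt_sq_sum_zero: "weighted_inv_cbrt_sq_sum N p 0 = cbrt_sum N p 0"
  unfolding weighted_inv_cbrt_sq_sum_def cbrt_sum_def
  by (rule sum.cong) (use p_pos mult_powr_neg_two_thirds in auto)

lemma P3_feasible_bounds:
  assumes "P3_feasible \<gamma> \<upsilon> c T N f y"
  shows "(\<Sum>k=1..N. 1 / f k) \<le> T" and "\<gamma> * (\<Sum>k=1..N. (f k)^2) \<le> \<upsilon> * c * T"
proof -
  from assms have energy: "(\<Sum>k=1..N. \<gamma> * (f k)^2) \<le> \<upsilon> * c * (\<Sum>k=1..N. y k)"
    and time: "(\<Sum>k=1..N. y k) \<le> T" and f: "\<forall>k\<in>{1..N}. f k > 0 \<and> 1 / f k \<le> y k"
    unfolding P3_feasible_def by auto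
  have recip: "(\<Sum>k=1..N. 1 / f k) \<le> (\<Sum>k=1..N. y k)" using f by (intro sum_mono) auto
  with time show "(\<Sum>k=1..N. 1 / f k) \<le> T" by linarith
  have "0 < (\<Sum>k=1..N. 1 / f k)" using f N_pos by (intro sum_pos) auto
  with recip have y_pos: "0 < (\<Sum>k=1..N. y k)" by linarith
  have "0 < (\<Sum>k=1..N. \<gamma> * (f k)^2)"
    using f N_pos gamma_pos by (intro sum_pos) (force intro!: mult_pos_pos)+
  with energy have "0 < \<upsilon> * c * (\<Sum>k=1..N. y k)" by linarith
  with y_pos have "0 < \<upsilon> * c" by (simp add: zero_less_mult_iff)
  with time have "\<upsilon> * c * (\<Sum>k=1..N. y k) \<le> \<upsilon> * c * T" by (intro mult_left_mono) auto
  with energy show "\<gamma> * (\<Sum>k=1..N. (f k)^2) \<le> \<upsilon> * c * T" by (simp add: sum_distrib_left)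
qed

text \<open>Weak duality: Hoelder with weights \<open>(p k + l) powr (1/3)\<close>, then the energy
  constraint priced at \<open>l\<close>.\<close>
lemma P3_objective_ge_lagrangian:
  assumes l: "l \<ge> 0" and F: "P3_feasible \<gamma> \<upsilon> c T N f y"
  shows "\<gamma> * cbrt_sum N p l ^ 3 / T^2 - l * \<upsilon> * c * T \<le> P3_objective \<gamma> N p f"
proof -
  have f_pos: "f k > 0" if "k \<in> {1..N}" for k using F that unfolding P3_feasible_def by auto
  have "cbrt_sum N p l ^ 3 / T^2 \<le> (\<Sum>k=1..N. ((p k + l) powr (1/3))^3 * f k^2)"
    unfolding cbrt_sum_def
    by (rule holder_cube_reciprocal)
      (use N_pos p_shift_pos[OF l] f_pos P3_feasible_bounds(1)[OF F] in \<open>auto simp: less_le\<close>)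
  also have "\<dots> = (\<Sum>k=1..N. (p k + l) * f k^2)"
    by (rule sum.cong) (simp_all add: powr_one_third_cube p_shift_pos l)
  also have "\<dots> = (\<Sum>k=1..N. p k * f k^2) + l * (\<Sum>k=1..N. f k^2)"
    by (simp add: algebra_simps sum.distrib sum_distrib_left)
  finally have "\<gamma> * (cbrt_sum N p l ^ 3 / T^2)
      \<le> \<gamma> * ((\<Sum>k=1..N. p k * f k^2) + l * (\<Sum>k=1..N. f k^2))"
    using gamma_pos by (intro mult_left_mono) auto
  then have "\<gamma> * cbrt_sum N p l ^ 3 / T^2
      \<le> \<gamma> * (\<Sum>k=1..N. p k * f k^2) + l * (\<gamma> * (\<Sum>k=1..N. f k^2))"
    by (simp add: algebra_simps)
  also have "\<dots> \<le> \<gamma> * (\<Sum>k=1..N. p k * f k^2) + l * (\<upsilon> * c * T)"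
    using P3_feasible_bounds(2)[OF F] l by (simp add: mult_left_mono)
  finally show ?thesis
    unfolding P3_objective_def by (simp add: sum_distrib_left algebra_simps)
qed

text \<open>The candidate optimum spends all of \<open>T\<close>, with \<open>f k\<close> proportional to
  \<open>(p k + l) powr (-1/3)\<close>.\<close>
lemma P3_feasible_at_multiplier:
  assumes l: "l \<ge> 0" and energy: "\<gamma> * multiplier_function N p l \<le> \<upsilon> * c * T^3"
  shows "\<exists>f y. P3_feasible \<gamma> \<upsilon> c T N f y \<and>
           P3_objective \<gamma> N p f = \<gamma> / T^2 * cbrt_sum N p l ^ 2 * weighted_inv_cbrt_sq_sum N p l"
proof -
  define S where "S = cbrt_sum N p l"
  have S: "S > 0" unfolding S_def using cbrt_sum_pos l by blast
  define r where "r k = (p k + l) powr (1/3)" for k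
  have r: "r k > 0" if "k \<in> {1..N}" for k using p_shift_pos[OF l that] unfolding r_def by auto
  define f where "f k = S / (T * r k)" for k
  define y where "y k = T * r k / S" for k
  have f_sq: "(f k)^2 = S^2 / T^2 * (p k + l) powr (-2/3)" if "k \<in> {1..N}" for k
    using powr_neg_two_thirds[OF p_shift_pos[OF l that]]
    by (simp add: f_def r_def power_divide power_mult_distrib)
  have time: "(\<Sum>k=1..N. y k) = T"
    unfolding y_def using S T_pos
    by (simp add: S_def cbrt_sum_def r_def flip: sum_divide_distrib sum_distrib_left)
  have "(\<Sum>k=1..N. \<gamma> * (f k)^2) = (\<Sum>k=1..N. \<gamma> * S^2 / T^2 * (p k + l) powr (-2/3))"
    by (rule sum.cong) (simp_all add: f_sq)
  also have "\<dots> = \<gamma> * S^2 / T^2 * inv_cbrt_sq_sum N p l"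
    unfolding inv_cbrt_sq_sum_def sum_distrib_left ..
  finally have "T^2 * (\<Sum>k=1..N. \<gamma> * (f k)^2) = \<gamma> * multiplier_function N p l"
    using T_pos by (simp add: multiplier_function_def S_def)
  also have "\<dots> \<le> T^2 * (\<upsilon> * c * T)"
    using energy by (simp add: power2_eq_square power3_eq_cube algebra_simps)
  finally have "(\<Sum>k=1..N. \<gamma> * (f k)^2) \<le> \<upsilon> * c * (\<Sum>k=1..N. y k)"
    using T_pos time by simp
  moreover have "f k > 0 \<and> 1 / f k - y k \<le> 0" if "k \<in> {1..N}" for k
    using r[OF that] S T_pos by (simp add: f_def y_def)
  ultimately have "P3_feasible \<gamma> \<upsilon> c T N f y"
    unfolding P3_feasible_def using time by simp
  moreover have "P3_objective \<gamma> N p f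
      = \<gamma> / T^2 * cbrt_sum N p l ^ 2 * weighted_inv_cbrt_sq_sum N p l"
    unfolding P3_objective_def weighted_inv_cbrt_sq_sum_def
    by (simp add: f_sq S_def sum_distrib_left sum_divide_distrib mult_ac)
  ultimately show ?thesis by blast
qed

lemma P3_value_le_objective:
  assumes "P3_feasible \<gamma> \<upsilon> c T N f y"
  shows "P3_value \<gamma> \<upsilon> c T N p \<le> P3_objective \<gamma> N p f"
proof -
  have "0 \<le> P3_objective \<gamma> N p g" for g
    unfolding P3_objective_def using gamma_pos p_pos by (intro sum_nonneg) (simp add: less_imp_le)
  then show ?thesis
    unfolding P3_value_def using assms by (intro cInf_lower bdd_belowI[where m=0]) auto
qed

lemma P3_value_greatest:
  assumes "P3_feasible \<gamma> \<upsilon> c T N f y"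
    and "\<And>f y. P3_feasible \<gamma> \<upsilon> c T N f y \<Longrightarrow> L \<le> P3_objective \<gamma> N p f"
  shows "L \<le> P3_value \<gamma> \<upsilon> c T N p"
  unfolding P3_value_def using assms by (intro cInf_greatest) auto

lemma P3_value_ge_lagrangian:
  assumes "l \<ge> 0" and "P3_feasible \<gamma> \<upsilon> c T N f y"
  shows "\<gamma> * cbrt_sum N p l ^ 3 / T^2 - l * \<upsilon> * c * T \<le> P3_value \<gamma> \<upsilon> c T N p"
  using assms by (intro P3_value_greatest P3_objective_ge_lagrangian)

text \<open>Strong duality: under equality in the energy constraint, the point of
  \<open>P3_feasible_at_multiplier\<close> attains the Lagrangian lower bound.\<close>
lemma P3_value_at_multiplier:
  assumes l: "l \<ge> 0" and balance: "multiplier_function N p l = \<upsilon> * c * T^3 / \<gamma>"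
  shows "P3_value \<gamma> \<upsilon> c T N p = \<gamma> / T^2 * cbrt_sum N p l ^ 2 * weighted_inv_cbrt_sq_sum N p l"
    and "P3_value \<gamma> \<upsilon> c T N p = \<gamma> * cbrt_sum N p l ^ 3 / T^2 - l * \<upsilon> * c * T"
proof -
  have energy: "\<gamma> * multiplier_function N p l = \<upsilon> * c * T^3"
    using balance gamma_pos by simp
  have "\<gamma> * cbrt_sum N p l ^ 3 / T^2 - l * \<upsilon> * c * T
      = \<gamma> / T^2 * cbrt_sum N p l ^ 2 * (cbrt_sum N p l - l * inv_cbrt_sq_sum N p l)"
    using energy T_pos
    by (simp add: multiplier_function_def field_simps power2_eq_square power3_eq_cube)
  then have dual: "\<gamma> * cbrt_sum N p l ^ 3 / T^2 - l * \<upsilon> * c * T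
      = \<gamma> / T^2 * cbrt_sum N p l ^ 2 * weighted_inv_cbrt_sq_sum N p l"
    using cbrt_sum_minus_inv_cbrt_sq_sum[OF l] by simp
  obtain f y where F: "P3_feasible \<gamma> \<upsilon> c T N f y"
    and obj: "P3_objective \<gamma> N p f = \<gamma> / T^2 * cbrt_sum N p l ^ 2 * weighted_inv_cbrt_sq_sum N p l"
    using P3_feasible_at_multiplier[OF l, of \<upsilon> c] energy by auto
  show "P3_value \<gamma> \<upsilon> c T N p = \<gamma> / T^2 * cbrt_sum N p l ^ 2 * weighted_inv_cbrt_sq_sum N p l"
    using P3_value_le_objective[OF F] P3_value_ge_lagrangian[OF l F] obj dual by linarith
  with dual show "P3_value \<gamma> \<upsilon> c T N p = \<gamma> * cbrt_sum N p l ^ 3 / T^2 - l * \<upsilon> * c * T"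
    by simp
qed

lemma P3_feasible_uniform:
  assumes "real N ^ 3 \<le> \<upsilon> * c * T^3 / \<gamma>"
  shows "P3_feasible \<gamma> \<upsilon> c T N (\<lambda>k. real N / T) (\<lambda>k. T / real N)"
proof -
  have N: "real N > 0" using N_pos by simp
  have "(\<Sum>k=1..N. \<gamma> * (real N / T)^2) = \<gamma> * real N ^ 3 / T^2"
    by (simp add: power2_eq_square power3_eq_cube)
  also have "\<dots> \<le> \<upsilon> * c * T"
    using assms gamma_pos T_pos by (simp add: field_simps power2_eq_square power3_eq_cube)
  finally show ?thesis
    unfolding P3_feasible_def using N T_pos by simp
qed

lemma P3_objective_uniform:
  "P3_objective \<gamma> N p (\<lambda>k. real N / T) = \<gamma> * real N ^ 2 / T^2 * (\<Sum>k=1..N. p k)"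
  unfolding P3_objective_def
  by (simp add: power_divide sum_distrib_left sum_distrib_right mult_ac flip: sum_divide_distrib)

text \<open>Below the threshold the time budget forces equal frequencies: AM-GM with
  \<open>m = N / T\<close> is tight in every term.\<close>
lemma P3_feasible_uniform_forced:
  assumes F: "P3_feasible \<gamma> \<upsilon> c T N f y" and c: "\<upsilon> * c * T^3 / \<gamma> \<le> real N ^ 3"
    and k: "k \<in> {1..N}"
  shows "f k = real N / T"
proof -
  define m where "m = real N / T"
  have m: "m > 0" using N_pos T_pos by (simp add: m_def)
  have f: "f k > 0" if "k \<in> {1..N}" for k using F that unfolding P3_feasible_def by auto
  define d where "d k = f k^2 + 2 * m^3 / f k - 3 * m^2" for k
  have d_nonneg: "d k \<ge> 0" if "k \<in> {1..N}" for k
    using amgm_cube[OF f[OF that] _ m, of 1] by (simp add: d_def)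
  have "\<upsilon> * c * T \<le> \<gamma> * real N ^ 3 / T^2"
    using c gamma_pos T_pos by (simp add: field_simps power2_eq_square power3_eq_cube)
  with P3_feasible_bounds(2)[OF F]
  have "\<gamma> * (\<Sum>k=1..N. f k^2) \<le> \<gamma> * (real N ^ 3 / T^2)" by simp
  then have sq: "(\<Sum>k=1..N. f k^2) \<le> real N ^ 3 / T^2"
    by (rule mult_left_le_imp_le[OF _ gamma_pos])
  have "(\<Sum>k=1..N. d k) = (\<Sum>k=1..N. f k^2) + 2 * m^3 * (\<Sum>k=1..N. 1 / f k) - 3 * m^2 * real N"
    by (simp add: d_def sum.distrib sum_subtractf sum_distrib_left)
  also have "\<dots> \<le> real N ^ 3 / T^2 + 2 * m^3 * T - 3 * m^2 * real N"
    using sq P3_feasible_bounds(1)[OF F] m by (simp add: add_mono)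
  also have "\<dots> = 0"
    using T_pos by (simp add: m_def field_simps power2_eq_square power3_eq_cube)
  finally have "(\<Sum>k=1..N. d k) = 0" using d_nonneg by (meson antisym sum_nonneg)
  then have "d k = 0" using d_nonneg k sum_nonneg_eq_0_iff[of "{1..N}" d] by simp
  then show ?thesis using amgm_cube_eq[OF f[OF k] m] by (simp add: d_def m_def)
qed

lemma multiplier_function_le:
  assumes l: "l > 0"
  shows "multiplier_function N p l \<le> real N ^ 3 * (1 + (\<Sum>k=1..N. p k) / l)"
proof -
  define M where "M = (\<Sum>k=1..N. p k)"
  have pM: "p k \<le> M" if "k \<in> {1..N}" for k
    unfolding M_def using that p_pos by (intro member_le_sum) (auto simp: less_imp_le)
  have M: "M > 0" using pM[of 1] p_pos[of 1] N_pos by simp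
  have "cbrt_sum N p l \<le> real N * (M + l) powr (1/3)"
    unfolding cbrt_sum_def
    using sum_bounded_above[of "{1..N}" "\<lambda>k. (p k + l) powr (1/3)"] pM p_shift_pos l
    by (simp add: powr_mono2 less_imp_le)
  then have "cbrt_sum N p l ^ 2 \<le> (real N * (M + l) powr (1/3))^2"
    using cbrt_sum_pos[of l] l by (intro power_mono) auto
  also have "\<dots> = real N ^ 2 * (M + l) powr (2/3)"
    using M l by (simp add: power_mult_distrib powr_power)
  finally have S: "cbrt_sum N p l ^ 2 \<le> real N ^ 2 * (M + l) powr (2/3)" .
  have R: "inv_cbrt_sq_sum N p l \<le> real N * l powr (-2/3)"
    unfolding inv_cbrt_sq_sum_def
    using sum_bounded_above[of "{1..N}" "\<lambda>k. (p k + l) powr (-2/3)"] p_pos l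
    by (simp add: powr_mono2' less_imp_le)
  have "multiplier_function N p l \<le> real N ^ 2 * (M + l) powr (2/3) * (real N * l powr (-2/3))"
    unfolding multiplier_function_def using S R
    by (intro mult_mono) (auto simp: inv_cbrt_sq_sum_def intro: sum_nonneg)
  also have "\<dots> = real N ^ 3 * ((M + l) / l) powr (2/3)"
    using M l by (simp add: powr_divide powr_minus_divide power3_eq_cube power2_eq_square)
  also have "\<dots> \<le> real N ^ 3 * ((M + l) / l)"
    using powr_mono[of "2/3" 1 "(M + l) / l"] M l by (intro mult_left_mono) auto
  also have "\<dots> = real N ^ 3 * (1 + M / l)"
    using l by (simp add: add_divide_distrib)
  finally show ?thesis by (simp add: M_def)
qed

lemma multiplier_function_solvable:
  assumes lower: "real N ^ 3 < t" and upper: "t < multiplier_function N p 0"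
  shows "\<exists>l>0. multiplier_function N p l = t"
proof -
  define M where "M = (\<Sum>k=1..N. p k)"
  have M: "M > 0" unfolding M_def using N_pos p_pos by (intro sum_pos) auto
  have N3: "real N ^ 3 > 0" using N_pos by simp
  define \<epsilon> where "\<epsilon> = t / real N ^ 3 - 1"
  have \<epsilon>: "\<epsilon> > 0" using lower N3 by (simp add: \<epsilon>_def field_simps)
  define L where "L = 2 * M / \<epsilon>"
  have L: "L > 0" using M \<epsilon> by (simp add: L_def)
  have "multiplier_function N p L \<le> real N ^ 3 * (1 + \<epsilon> / 2)"
    using multiplier_function_le[OF L] M \<epsilon> by (simp add: L_def M_def)
  also have "\<dots> = (real N ^ 3 + t) / 2"
    using N3 by (simp add: \<epsilon>_def field_simps)
  also have "\<dots> < t"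
    using lower by simp
  finally have at_L: "multiplier_function N p L < t" .
  have "continuous_on {0..L} (multiplier_function N p)"
    unfolding multiplier_function_def cbrt_sum_def inv_cbrt_sq_sum_def
    by (intro continuous_intros) (force dest: p_shift_pos)+
  then obtain l where "0 \<le> l" "l \<le> L" "multiplier_function N p l = t"
    using IVT2'[of "multiplier_function N p" L t 0] at_L upper L by auto
  moreover have "l \<noteq> 0" using calculation upper by auto
  ultimately show ?thesis by (intro exI[of _ l]) auto
qed

lemma P3_value_le_uniform:
  assumes "real N ^ 3 \<le> \<upsilon> * c * T^3 / \<gamma>"
  shows "P3_value \<gamma> \<upsilon> c T N p \<le> \<gamma> * real N ^ 2 / T^2 * (\<Sum>k=1..N. p k)"
  using P3_value_le_objective[OF P3_feasible_uniform[OF assms]] by (simp add: P3_objective_uniform)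

lemma P3_value_at_threshold:
  assumes c: "\<upsilon> * c * T^3 / \<gamma> = real N ^ 3"
  shows "P3_value \<gamma> \<upsilon> c T N p = \<gamma> * real N ^ 2 / T^2 * (\<Sum>k=1..N. p k)"
proof (rule antisym)
  show "P3_value \<gamma> \<upsilon> c T N p \<le> \<gamma> * real N ^ 2 / T^2 * (\<Sum>k=1..N. p k)"
    using c by (intro P3_value_le_uniform) simp
  show "\<gamma> * real N ^ 2 / T^2 * (\<Sum>k=1..N. p k) \<le> P3_value \<gamma> \<upsilon> c T N p"
  proof (rule P3_value_greatest)
    show "P3_feasible \<gamma> \<upsilon> c T N (\<lambda>k. real N / T) (\<lambda>k. T / real N)"
      using c by (intro P3_feasible_uniform) simp
    fix f y assume "P3_feasible \<gamma> \<upsilon> c T N f y"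
    then have "P3_objective \<gamma> N p f = P3_objective \<gamma> N p (\<lambda>k. real N / T)"
      unfolding P3_objective_def using P3_feasible_uniform_forced c by (intro sum.cong) auto
    then show "\<gamma> * real N ^ 2 / T^2 * (\<Sum>k=1..N. p k) \<le> P3_objective \<gamma> N p f"
      by (simp add: P3_objective_uniform)
  qed
qed

text \<open>The Lagrangian bound at the optimal multiplier of \<open>c2\<close> is linear in \<open>c\<close>
  with slope \<open>-l \<upsilon> T < 0\<close>.\<close>
lemma P3_value_strict_antimono:
  assumes \<upsilon>: "\<upsilon> > 0" and c1: "real N ^ 3 \<le> \<upsilon> * c1 * T^3 / \<gamma>" and "c1 < c2"
    and c2: "\<upsilon> * c2 * T^3 / \<gamma> < multiplier_function N p 0"
  shows "P3_value \<gamma> \<upsilon> c2 T N p < P3_value \<gamma> \<upsilon> c1 T N p"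
proof -
  have "\<upsilon> * c1 * T^3 / \<gamma> < \<upsilon> * c2 * T^3 / \<gamma>"
    using \<open>c1 < c2\<close> \<upsilon> T_pos gamma_pos by (simp add: divide_strict_right_mono)
  then obtain l where l: "l > 0" "multiplier_function N p l = \<upsilon> * c2 * T^3 / \<gamma>"
    using multiplier_function_solvable c1 c2 by (meson order_le_less_trans)
  have "P3_value \<gamma> \<upsilon> c2 T N p = \<gamma> * cbrt_sum N p l ^ 3 / T^2 - l * \<upsilon> * c2 * T"
    using P3_value_at_multiplier(2) l by simp
  also have "\<dots> < \<gamma> * cbrt_sum N p l ^ 3 / T^2 - l * \<upsilon> * c1 * T"
    using l \<upsilon> T_pos \<open>c1 < c2\<close> by simp
  also have "\<dots> \<le> P3_value \<gamma> \<upsilon> c1 T N p"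
    using P3_value_ge_lagrangian P3_feasible_uniform[OF c1] l by simp
  finally show ?thesis .
qed

lemma P3_value_gt_saturated:
  assumes "\<upsilon> > 0" and c: "real N ^ 3 \<le> \<upsilon> * c * T^3 / \<gamma>"
    and "\<upsilon> * c * T^3 / \<gamma> < multiplier_function N p 0"
  shows "\<gamma> / T^2 * cbrt_sum N p 0 ^ 3 < P3_value \<gamma> \<upsilon> c T N p"
proof -
  define s where "s = \<upsilon> * T^3 / \<gamma>"
  have s: "s > 0" using assms(1) T_pos gamma_pos by (simp add: s_def)
  have scale: "\<upsilon> * x * T^3 / \<gamma> = s * x" for x by (simp add: s_def)
  define c' where "c' = (c + multiplier_function N p 0 / s) / 2"
  have mid: "s * c' = (s * c + multiplier_function N p 0) / 2"
    using s by (simp add: c'_def field_simps)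
  have c': "real N ^ 3 \<le> \<upsilon> * c' * T^3 / \<gamma>" "\<upsilon> * c' * T^3 / \<gamma> < multiplier_function N p 0"
    using assms(2,3) mid unfolding scale by auto
  have "c < c'"
    using assms(3) s unfolding scale c'_def by (simp add: field_simps)
  have "\<gamma> / T^2 * cbrt_sum N p 0 ^ 3 \<le> P3_value \<gamma> \<upsilon> c' T N p"
    using P3_value_ge_lagrangian[OF _ P3_feasible_uniform[OF c'(1)], of 0] by simp
  also have "\<dots> < P3_value \<gamma> \<upsilon> c T N p"
    using P3_value_strict_antimono[OF assms(1) c \<open>c < c'\<close> c'(2)] .
  finally show ?thesis .
qed

text \<open>Once the energy constraint is slack at the multiplier \<open>0\<close>, the time constraint
  alone determines the optimum.\<close>
lemma P3_value_saturated:
  assumes c: "multiplier_function N p 0 \<le> \<upsilon> * c * T^3 / \<gamma>"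
  shows "P3_value \<gamma> \<upsilon> c T N p = \<gamma> / T^2 * cbrt_sum N p 0 ^ 3"
proof -
  obtain f y where F: "P3_feasible \<gamma> \<upsilon> c T N f y"
    and obj: "P3_objective \<gamma> N p f = \<gamma> / T^2 * cbrt_sum N p 0 ^ 3"
    using P3_feasible_at_multiplier[of 0 \<upsilon> c] c gamma_pos
    by (auto simp: weighted_inv_cbrt_sq_sum_zero power2_eq_square power3_eq_cube
        pos_le_divide_eq mult.commute)
  show ?thesis
    using P3_value_le_objective[OF F] P3_value_ge_lagrangian[OF _ F, of 0] obj by simp
qed

end

theorem corollary1:
  fixes N :: nat and \<gamma> \<upsilon> Pb h T :: real and p :: "nat \<Rightarrow> real"
  assumes N2: "N \<ge> 2"
    and g: "\<gamma> > 0" and u: "0 < \<upsilon>" "\<upsilon> \<le> 1"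
    and Pb: "Pb > 0" and h: "h > 0" and T: "T > 0"
    and pdec: "\<And>i j. 1 \<le> i \<Longrightarrow> i < j \<Longrightarrow> j \<le> N \<Longrightarrow> p j < p i"
    and pN: "p N > 0" and p1: "p 1 \<le> 1"
  defines "a \<equiv> \<gamma> * real N ^ 3 / (\<upsilon> * T ^ 3)"
    and "a' \<equiv> \<gamma> / (\<upsilon> * T ^ 3) * (\<Sum>k=1..N. p k powr (1/3)) ^ 2
                 * (\<Sum>k=1..N. p k powr (-2/3))"
    and "E \<equiv> (\<lambda>c. P3_value \<gamma> \<upsilon> c T N p)"
  shows
    "(a < Pb * h \<and> Pb * h < a' \<longrightarrow>
        (\<exists>lam>0. (\<Sum>k=1..N. (p k + lam) powr (1/3)) ^ 2 * (\<Sum>k=1..N. (p k + lam) powr (-2/3))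
                 = \<upsilon> * Pb * h * T ^ 3 / \<gamma>) \<and>
        (\<forall>lam>0. (\<Sum>k=1..N. (p k + lam) powr (1/3)) ^ 2 * (\<Sum>k=1..N. (p k + lam) powr (-2/3))
                 = \<upsilon> * Pb * h * T ^ 3 / \<gamma> \<longrightarrow>
            E (Pb * h) = \<gamma> / T ^ 2 * (\<Sum>k=1..N. (p k + lam) powr (1/3)) ^ 2
                          * (\<Sum>k=1..N. p k * (p k + lam) powr (-2/3)))) \<and>
     (Pb * h = a \<longrightarrow> E (Pb * h) = \<gamma> * real N ^ 2 / T ^ 2 * (\<Sum>k=1..N. p k)) \<and>
     (\<forall>c1 c2. a \<le> c1 \<longrightarrow> c1 < c2 \<longrightarrow> c2 < a' \<longrightarrow> E c2 < E c1) \<and>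
     (a \<le> Pb * h \<and> Pb * h < a' \<longrightarrow>
        \<gamma> / T ^ 2 * (\<Sum>k=1..N. p k powr (1/3)) ^ 3 < E (Pb * h) \<and>
        E (Pb * h) \<le> \<gamma> * real N ^ 2 / T ^ 2 * (\<Sum>k=1..N. p k)) \<and>
     (Pb * h \<ge> a' \<longrightarrow> E (Pb * h) = \<gamma> / T ^ 2 * (\<Sum>k=1..N. p k powr (1/3)) ^ 3)"
proof -
  have p_pos: "p k > 0" if "k \<in> {1..N}" for k
    using that pN pdec[of k N] by (cases "k = N") auto
  have N: "N \<ge> 1" using N2 by simp
  note value_facts = multiplier_function_solvable P3_value_at_multiplier(1) P3_value_at_threshold
    P3_value_strict_antimono P3_value_gt_saturated P3_value_le_uniform P3_value_saturated
  note value_facts = value_facts[OF g T N p_pos]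
  have a: "a \<le> c \<longleftrightarrow> real N ^ 3 \<le> \<upsilon> * c * T^3 / \<gamma>"
    "a < c \<longleftrightarrow> real N ^ 3 < \<upsilon> * c * T^3 / \<gamma>"
    "c = a \<longleftrightarrow> \<upsilon> * c * T^3 / \<gamma> = real N ^ 3" for c
    using g u(1) T by (auto simp: a_def field_simps)
  have a': "c < a' \<longleftrightarrow> \<upsilon> * c * T^3 / \<gamma> < multiplier_function N p 0"
    "a' \<le> c \<longleftrightarrow> multiplier_function N p 0 \<le> \<upsilon> * c * T^3 / \<gamma>" for c
    using g u(1) T
    by (auto simp: a'_def multiplier_function_def cbrt_sum_def inv_cbrt_sq_sum_def field_simps)
  show ?thesis
    unfolding E_def a a'
    using value_facts u(1)
    by (auto simp: multiplier_function_def cbrt_sum_def inv_cbrt_sq_sum_def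
        weighted_inv_cbrt_sq_sum_def mult.assoc)
qed

end
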